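(* Let $K:\mathbb G\setminus\{0\}\to\mathbb R$ be continuous with $|K(p)|\le B/d(p,0)$ for all $p\ne0$. Let $\mu$ be a $1$-regular Radon measure on $\mathbb G$ with regularity constant $C_R$ such that $\operatorname{supp}\mu=A\cup B'$, where $B'$ is bounded and $\operatorname{dist}(A,B')\ge\operatorname{diam}(B')$. Let $\mu_1=\mu|_A$ and $\mu_2=\mu|_{B'}$. If $$\|T_{\mu_1}\|_{L^2(\mu_1)\to L^2(\mu_1)}\le C_1<\infty\quad\text{and}\quad\|T_{\mu_2}\|_{L^2(\mu_2)\to L^2(\mu_2)}\le C_2<\infty,$$ then $\|T_\mu\|_{L^2(\mu)\to L^2(\mu)}\le C$ for a constant $C$ depending only on $C_1,C_2,C_R$ and $B$ (and $\mathbb G,d$).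
   Context: $\mathbb G$ is a Carnot group (identified with $\mathbb R^N$ via exponential coordinates, identity $0$) equipped with a fixed left-invariant metric $d$ homogeneous with respect to the Carnot dilations; $B(p,r)$ are $d$-balls. A Radon measure $\mu$ is $1$-regular with constant $C_R\ge1$ if $C_R^{-1}r\le\mu(B(p,r))\le C_Rr$ for all $p\in\operatorname{supp}\mu$ and $0<r\le\operatorname{diam}(\operatorname{supp}\mu)$. For an upper $1$-regular measure $\nu$ (i.e. $\nu(B(p,r))\lesssim r$) and $\varepsilon>0$, $T_{\nu,\varepsilon}f(p)=\int_{d(p,q)>\varepsilon}K(q^{-1}p)f(q)\,d\nu(q)$, and $\|T_\nu\|_{L^2(\nu)\to L^2(\nu)}$ denotes the least $C$ with $\|T_{\nu,\varepsilon}f\|_{L^2(\nu)}\le C\|f\|_{L^2(\nu)}$ for all $f\in L^2(\nu)$ and all $\varepsilon>0$. *)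

theory Defs
  imports "HOL-Analysis.Analysis" "HOL-Probability.Probability"
begin

definition poly_map :: "('b::euclidean_space \<Rightarrow> 'c::euclidean_space) \<Rightarrow> bool" where
  "poly_map F \<longleftrightarrow> (\<forall>c\<in>Basis. \<exists>E coef. finite E \<and>
      (\<forall>x. F x \<bullet> c = (\<Sum>e\<in>E. coef e * (\<Prod>b\<in>Basis. (x \<bullet> b) ^ (e b)))))"

text \<open>Lie bracket of the Lie algebra (identified with the underlying space via
exponential coordinates): the second order term of the group commutator
(tx)(ty)(tx)^{-1}(ty)^{-1}; in exponential coordinates the inverse of x is -x.\<close>
definition lie_br :: "('a::euclidean_space \<Rightarrow> 'a \<Rightarrow> 'a) \<Rightarrow> 'a \<Rightarrow> 'a \<Rightarrow> 'a" where
  "lie_br gmul x y = Lim (at (0::real))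
     (\<lambda>t. (1 / t^2) *\<^sub>R gmul (gmul (t *\<^sub>R x) (t *\<^sub>R y)) (gmul (- (t *\<^sub>R x)) (- (t *\<^sub>R y))))"

text \<open>A Carnot group of step s on the Euclidean space 'a in exponential
coordinates: a group law with identity 0 which is polynomial (hence a Lie group
structure), for which the lines through 0 are one-parameter subgroups (this
says exactly that the identity map is the exponential map), and whose Lie
algebra is stratified as V 1 \<oplus> ... \<oplus> V s with [V 1, V j] = V (j+1),
[V 1, V s] = 0.\<close>
definition carnot_group :: "('a::euclidean_space \<Rightarrow> 'a \<Rightarrow> 'a) \<Rightarrow> (nat \<Rightarrow> 'a set) \<Rightarrow> nat \<Rightarrow> bool" where
  "carnot_group gmul V s \<longleftrightarrow>
     (\<forall>x y z. gmul (gmul x y) z = gmul x (gmul y z)) \<and>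
     (\<forall>x. gmul 0 x = x \<and> gmul x 0 = x) \<and>
     (\<forall>x a b. gmul (a *\<^sub>R x) (b *\<^sub>R x) = (a + b) *\<^sub>R x) \<and>
     poly_map (\<lambda>z::'a \<times> 'a. gmul (fst z) (snd z)) \<and>
     1 \<le> s \<and>
     (\<forall>j\<in>{1..s}. subspace (V j)) \<and>
     (\<forall>x. \<exists>!v. (\<forall>j. v j \<in> (if j \<in> {1..s} then V j else {0})) \<and> x = sum v {1..s}) \<and>
     (\<forall>j. 1 \<le> j \<and> j < s \<longrightarrow>
         span {lie_br gmul v w | v w. v \<in> V 1 \<and> w \<in> V j} = V (Suc j)) \<and>
     (\<forall>v\<in>V 1. \<forall>w\<in>V s. lie_br gmul v w = 0)"

definition carnot_dilations :: "(nat \<Rightarrow> 'a::euclidean_space set) \<Rightarrow> nat \<Rightarrow> (real \<Rightarrow> 'a \<Rightarrow> 'a) \<Rightarrow> bool" where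
  "carnot_dilations V s dil \<longleftrightarrow>
     (\<forall>t>0. linear (dil t) \<and> (\<forall>j\<in>{1..s}. \<forall>v\<in>V j. dil t v = (t ^ j) *\<^sub>R v))"

definition homogeneous_distance ::
  "('a::euclidean_space \<Rightarrow> 'a \<Rightarrow> 'a) \<Rightarrow> (real \<Rightarrow> 'a \<Rightarrow> 'a) \<Rightarrow> ('a \<Rightarrow> 'a \<Rightarrow> real) \<Rightarrow> bool" where
  "homogeneous_distance gmul dil d \<longleftrightarrow>
     (\<forall>x y. d x y = 0 \<longleftrightarrow> x = y) \<and>
     (\<forall>x y. d x y = d y x) \<and>
     (\<forall>x y z. d x z \<le> d x y + d y z) \<and>
     continuous_on UNIV (\<lambda>z::'a \<times> 'a. d (fst z) (snd z)) \<and>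
     (\<forall>p x y. d (gmul p x) (gmul p y) = d x y) \<and>
     (\<forall>t>0. \<forall>x y. d (dil t x) (dil t y) = t * d x y)"

definition dball :: "('a \<Rightarrow> 'a \<Rightarrow> real) \<Rightarrow> 'a \<Rightarrow> real \<Rightarrow> 'a set" where
  "dball d p r = {q. d p q \<le> r}"

definition dsupp :: "('a \<Rightarrow> 'a \<Rightarrow> real) \<Rightarrow> 'a measure \<Rightarrow> 'a set" where
  "dsupp d \<mu> = {p. \<forall>r>0. emeasure \<mu> {q. d p q < r} > 0}"

definition ddiam :: "('a \<Rightarrow> 'a \<Rightarrow> real) \<Rightarrow> 'a set \<Rightarrow> ereal" where
  "ddiam d S = (SUP p\<in>S. SUP q\<in>S. ereal (d p q))"

definition ddist :: "('a \<Rightarrow> 'a \<Rightarrow> real) \<Rightarrow> 'a set \<Rightarrow> 'a set \<Rightarrow> ereal" where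
  "ddist d S T = (INF p\<in>S. INF q\<in>T. ereal (d p q))"

definition d_bounded :: "('a \<Rightarrow> 'a \<Rightarrow> real) \<Rightarrow> 'a set \<Rightarrow> bool" where
  "d_bounded d S \<longleftrightarrow> (\<exists>R. \<forall>p\<in>S. \<forall>q\<in>S. d p q \<le> R)"

text \<open>Radon measures on R^N = locally finite Borel measures.\<close>
definition radon_measure :: "'a::euclidean_space measure \<Rightarrow> bool" where
  "radon_measure \<mu> \<longleftrightarrow> sets \<mu> = sets borel \<and> (\<forall>K. compact K \<longrightarrow> emeasure \<mu> K < \<infinity>)"

definition one_regular :: "('a \<Rightarrow> 'a \<Rightarrow> real) \<Rightarrow> 'a measure \<Rightarrow> real \<Rightarrow> bool" where
  "one_regular d \<mu> CR \<longleftrightarrow> 1 \<le> CR \<and>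
     (\<forall>p\<in>dsupp d \<mu>. \<forall>r. 0 < r \<and> ereal r \<le> ddiam d (dsupp d \<mu>) \<longrightarrow>
        ennreal (r / CR) \<le> emeasure \<mu> (dball d p r) \<and> emeasure \<mu> (dball d p r) \<le> ennreal (CR * r))"

definition restr_measure :: "'a measure \<Rightarrow> 'a set \<Rightarrow> 'a measure" where
  "restr_measure \<mu> A = density \<mu> (indicator A)"

definition trunc_SIO ::
  "('a::euclidean_space \<Rightarrow> 'a \<Rightarrow> 'a) \<Rightarrow> ('a \<Rightarrow> 'a \<Rightarrow> real) \<Rightarrow> ('a \<Rightarrow> real) \<Rightarrow> 'a measure
    \<Rightarrow> real \<Rightarrow> ('a \<Rightarrow> real) \<Rightarrow> 'a \<Rightarrow> real" where
  "trunc_SIO gmul d K \<nu> \<epsilon> f p =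
     (\<integral>q. indicator {q. d p q > \<epsilon>} q * K (gmul (- q) p) * f q \<partial>\<nu>)"

text \<open>\<open>SIO_bounded gmul d K \<nu> C\<close>: the L2(\<nu>) operator norm of T_\<nu> is at most C,
i.e. \<open>\<parallel>T_{\<nu>,\<epsilon>} f\<parallel> \<le> C \<parallel>f\<parallel>\<close> for all f in L2(\<nu>) and all \<epsilon> > 0 (squared form).\<close>
definition SIO_bounded ::
  "('a::euclidean_space \<Rightarrow> 'a \<Rightarrow> 'a) \<Rightarrow> ('a \<Rightarrow> 'a \<Rightarrow> real) \<Rightarrow> ('a \<Rightarrow> real) \<Rightarrow> 'a measure \<Rightarrow> real \<Rightarrow> bool" where
  "SIO_bounded gmul d K \<nu> C \<longleftrightarrow> 0 \<le> C \<and>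
     (\<forall>\<epsilon>>0. \<forall>f. f \<in> borel_measurable \<nu> \<and> (\<integral>\<^sup>+q. ennreal ((f q)^2) \<partial>\<nu>) < \<infinity> \<longrightarrow>
        (\<integral>\<^sup>+p. ennreal ((trunc_SIO gmul d K \<nu> \<epsilon> f p)^2) \<partial>\<nu>)
          \<le> ennreal (C^2) * (\<integral>\<^sup>+q. ennreal ((f q)^2) \<partial>\<nu>))"

end

theory Submission
  imports Defs
begin

text \<open>Split \<open>T\<^sub>\<mu>\<close> according to whether the source and the target point lie in \<open>A\<close> or in
  \<open>B'\<close>; the two points lie in exactly one piece each, up to a null set. The diagonal pieces are
  \<open>T\<^sub>\<mu>\<^sub>|\<^sub>A\<close> and \<open>T\<^sub>\<mu>\<^sub>|\<^sub>B\<^sub>'\<close>. For \<open>p \<in> A\<close>, \<open>q \<in> B'\<close> the separation gives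
  \<open>d(p,q) \<ge> D = diam B'\<close> and \<open>d(q\<^sub>0,p) \<le> 2 d(p,q)\<close> for a fixed \<open>q\<^sub>0 \<in> B'\<close>, so the kernel
  is dominated by the rank-one kernel \<open>2B/d(q\<^sub>0,p) \<cdot> 1\<^bsub>B'\<^esub>(q)\<close>. Its Hilbert-Schmidt norm
  is controlled by upper regularity alone: \<open>\<mu>(B') \<le> C\<^sub>R D\<close>, and summing over dyadic annuli
  \<open>\<integral>\<^bsub>d(q\<^sub>0,p) \<ge> D\<^esub> d(q\<^sub>0,p)\<^sup>-\<^sup>2 d\<mu>(p) \<le> 4 C\<^sub>R / D\<close>; the product does not depend on \<open>D\<close>.\<close>

section \<open>Carnot groups\<close>

lemma poly_map_continuous:
  fixes F :: "'b::euclidean_space \<Rightarrow> 'c::euclidean_space"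
  assumes "poly_map F"
  shows "continuous_on UNIV F"
proof -
  have coordinates: "continuous_on UNIV (\<lambda>x. F x \<bullet> c)" if c: "c \<in> Basis" for c
  proof -
    obtain E coef where "\<forall>x. F x \<bullet> c = (\<Sum>e\<in>E. coef e * (\<Prod>b\<in>Basis. (x \<bullet> b) ^ e b))"
      using bspec[OF assms[unfolded poly_map_def] c] by blast
    then have coord: "(\<lambda>x. F x \<bullet> c) = (\<lambda>x. \<Sum>e\<in>E. coef e * (\<Prod>b\<in>Basis. (x \<bullet> b) ^ e b))"
      by blast
    show ?thesis
      unfolding coord by (intro continuous_intros)
  qed
  have "continuous_on UNIV (\<lambda>x. \<Sum>c\<in>Basis. (F x \<bullet> c) *\<^sub>R c)"
    by (intro continuous_on_sum continuous_on_scaleR continuous_on_const coordinates)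
  then show ?thesis
    by (simp add: euclidean_representation)
qed

text \<open>Lines through 0 are one-parameter subgroups, so the inverse of \<open>q\<close> is \<open>-q\<close>.\<close>

lemma carnot_group_left_inverse:
  assumes "carnot_group gmul V s"
  shows "gmul (- q) q = 0"
proof -
  have "gmul ((-1) *\<^sub>R q) (1 *\<^sub>R q) = ((-1) + 1) *\<^sub>R q"
    using assms unfolding carnot_group_def by blast
  then show ?thesis
    by simp
qed

lemma carnot_group_kernel_measurable:
  assumes "carnot_group gmul V s" and "continuous_on (UNIV - {0}) K"
  shows "(\<lambda>z. K (gmul (- snd z) (fst z))) \<in> borel_measurable borel"
proof -
  have mult: "continuous_on UNIV (\<lambda>z. gmul (fst z) (snd z))"
    using assms(1) unfolding carnot_group_def by (intro poly_map_continuous) simp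
  have "continuous_on UNIV ((\<lambda>z. gmul (fst z) (snd z)) \<circ> (\<lambda>z. (- snd z, fst z)))"
    by (intro continuous_on_compose continuous_intros) (auto intro: continuous_on_subset[OF mult])
  then have translate: "(\<lambda>z. gmul (- snd z) (fst z)) \<in> borel_measurable borel"
    by (simp add: o_def borel_measurable_continuous_onI)
  have "(\<lambda>x. if x \<in> UNIV - {0} then K x else K x) \<in> borel_measurable borel"
    by (rule borel_measurable_continuous_on_if) (use assms(2) in \<open>auto simp: continuous_on_sing\<close>)
  then show ?thesis
    using measurable_compose[OF translate] by (simp add: o_def)
qed

lemma carnot_group_kernel_bound:
  assumes "carnot_group gmul V s" and "homogeneous_distance gmul dil d"
    and "\<forall>p. p \<noteq> 0 \<longrightarrow> \<bar>K p\<bar> \<le> Bk / d p 0" and "p \<noteq> q"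
  shows "\<bar>K (gmul (- q) p)\<bar> \<le> Bk / d p q"
proof -
  have "d (gmul (- q) p) (gmul (- q) q) = d p q"
    using assms(2) unfolding homogeneous_distance_def by blast
  then have translated: "d (gmul (- q) p) 0 = d p q"
    using carnot_group_left_inverse[OF assms(1)] by simp
  moreover have "d p q \<noteq> 0" and "d 0 0 = 0"
    using assms(2,4) unfolding homogeneous_distance_def by auto
  ultimately have "gmul (- q) p \<noteq> 0"
    by force
  then show ?thesis
    using assms(3) translated by auto
qed

section \<open>Continuous metrics\<close>

locale continuous_metric =
  fixes d :: "'a::euclidean_space \<Rightarrow> 'a \<Rightarrow> real"
  assumes d_eq_0_iff: "\<And>x y. d x y = 0 \<longleftrightarrow> x = y"
    and d_sym: "\<And>x y. d x y = d y x"
    and d_triangle: "\<And>x y z. d x z \<le> d x y + d y z"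
    and continuous_d: "continuous_on UNIV (\<lambda>z::'a \<times> 'a. d (fst z) (snd z))"
begin

lemma d_nonneg: "0 \<le> d x y"
proof -
  have "d x x \<le> d x y + d y x"
    by (rule d_triangle)
  then show ?thesis
    using d_eq_0_iff[of x x] d_sym[of x y] by simp
qed

lemma d_self [simp]: "d x x = 0"
  using d_eq_0_iff by simp

lemma continuous_on_d: "continuous_on UNIV (d p)"
proof -
  have "continuous_on UNIV ((\<lambda>z. d (fst z) (snd z)) \<circ> Pair p)"
    by (intro continuous_on_compose continuous_intros) (auto intro: continuous_on_subset[OF continuous_d])
  then show ?thesis
    by (simp add: o_def)
qed

lemma open_ball_d: "open {q. d p q < r}"
  by (rule open_Collect_less) (auto intro: continuous_on_d)

lemma borel_measurable_d [measurable]: "d p \<in> borel_measurable borel"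
  using continuous_on_d by (rule borel_measurable_continuous_onI)

lemma sets_dball [measurable]: "dball d p r \<in> sets borel"
  unfolding dball_def by (intro borel_closed closed_Collect_le continuous_on_d continuous_on_const)

lemma open_Compl_dsupp:
  assumes "radon_measure \<mu>"
  shows "open (- dsupp d \<mu>)"
    and "AE p in \<mu>. p \<in> dsupp d \<mu>"
proof -
  have sets: "sets \<mu> = sets borel"
    using assms unfolding radon_measure_def by blast
  define F where "F = {U. \<exists>p r. U = {q. d p q < r} \<and> emeasure \<mu> U = 0}"
  have open_F: "\<And>U. U \<in> F \<Longrightarrow> open U"
    unfolding F_def using open_ball_d by auto
  have "- dsupp d \<mu> = \<Union>F"
  proof
    show "- dsupp d \<mu> \<subseteq> \<Union>F"
    proof
      fix p assume "p \<in> - dsupp d \<mu>"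
      then obtain r where "r > 0" "\<not> emeasure \<mu> {q. d p q < r} > 0"
        unfolding dsupp_def by auto
      then have "{q. d p q < r} \<in> F"
        unfolding F_def by (auto simp: zero_less_iff_neq_zero)
      then show "p \<in> \<Union>F"
        by (rule UnionI) (simp add: \<open>r > 0\<close>)
    qed
    show "\<Union>F \<subseteq> - dsupp d \<mu>"
    proof
      fix q assume "q \<in> \<Union>F"
      then obtain p r where null: "emeasure \<mu> {x. d p x < r} = 0" and "d p q < r"
        unfolding F_def by auto
      have "{x. d q x < r - d p q} \<subseteq> {x. d p x < r}"
      proof
        fix x assume "x \<in> {x. d q x < r - d p q}"
        then show "x \<in> {x. d p x < r}"
          using d_triangle[of p x q] by simp
      qed
      then have "emeasure \<mu> {x. d q x < r - d p q} \<le> emeasure \<mu> {x. d p x < r}"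
        by (rule emeasure_mono) (simp add: sets borel_open[OF open_ball_d])
      then have "emeasure \<mu> {x. d q x < r - d p q} = 0"
        using null by simp
      moreover have "0 < r - d p q"
        using \<open>d p q < r\<close> by simp
      ultimately have "\<not> (\<forall>r>0. emeasure \<mu> {x. d q x < r} > 0)"
        by (metis less_irrefl)
      then show "q \<in> - dsupp d \<mu>"
        unfolding dsupp_def by simp
    qed
  qed
  then show "open (- dsupp d \<mu>)"
    using open_F by auto
  \<comment> \<open>By Lindel\<ouml>f, countably many null balls already cover the complement of the support.\<close>
  obtain F' where F': "F' \<subseteq> F" "countable F'" "\<Union>F' = \<Union>F"
    using Lindelof_openin[of F UNIV] open_F by (auto simp: openin_open_eq)
  have "(\<Union>U\<in>F'. U) \<in> null_sets \<mu>"
  proof (rule null_sets_UN'[OF F'(2)])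
    fix U assume "U \<in> F'"
    then obtain p r where U: "U = {q. d p q < r}" "emeasure \<mu> U = 0"
      using F'(1) unfolding F_def by blast
    have "U \<in> sets \<mu>"
      using sets borel_open[OF open_ball_d[of p r]] U(1) by simp
    then show "U \<in> null_sets \<mu>"
      using U(2) by (intro null_setsI)
  qed
  then show "AE p in \<mu>. p \<in> dsupp d \<mu>"
    by (rule AE_I') (use \<open>- dsupp d \<mu> = \<Union>F\<close> F' in auto)
qed

lemma sets_dsupp:
  assumes "radon_measure \<mu>"
  shows "dsupp d \<mu> \<in> sets borel"
  using open_Compl_dsupp(1)[OF assms] by (simp add: borel_closed closed_def)

lemma nonneg_if_bounded_by_inverse_distance:
  fixes K :: "'a \<Rightarrow> real"
  assumes "\<forall>p. p \<noteq> 0 \<longrightarrow> \<bar>K p\<bar> \<le> Bk / d p 0"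
  shows "0 \<le> Bk"
proof -
  obtain b :: 'a where "b \<in> Basis"
    using nonempty_Basis by blast
  then have "b \<noteq> 0" and "0 < d b 0"
    using d_nonneg[of b 0] d_eq_0_iff[of b 0] by auto
  then show ?thesis
    using assms by (meson abs_ge_zero order_trans zero_le_divide_iff not_le)
qed

end

lemma homogeneous_distance_continuous_metric:
  assumes "homogeneous_distance gmul dil d"
  shows "continuous_metric d"
proof
  show "d x y = 0 \<longleftrightarrow> x = y" "d x y = d y x" "d x z \<le> d x y + d y z" for x y z
    using assms unfolding homogeneous_distance_def by blast+
  show "continuous_on UNIV (\<lambda>z. d (fst z) (snd z))"
    using assms unfolding homogeneous_distance_def by blast
qed

lemma le_ddiam: "p \<in> S \<Longrightarrow> q \<in> S \<Longrightarrow> ereal (d p q) \<le> ddiam d S"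
  unfolding ddiam_def by (auto intro: SUP_upper2)

lemma ddist_le: "p \<in> S \<Longrightarrow> q \<in> T \<Longrightarrow> ddist d S T \<le> ereal (d p q)"
  unfolding ddist_def by (auto intro: INF_lower2)

lemma radon_measure_sigma_finite:
  fixes \<mu> :: "'b::euclidean_space measure"
  assumes "radon_measure \<mu>"
  shows "sigma_finite_measure \<mu>"
proof
  have sets: "sets \<mu> = sets borel"
    using assms unfolding radon_measure_def by blast
  let ?C = "range (\<lambda>n::nat. cball (0::'b) (real n))"
  show "\<exists>A. countable A \<and> A \<subseteq> sets \<mu> \<and> \<Union> A = space \<mu> \<and> (\<forall>a\<in>A. emeasure \<mu> a \<noteq> \<infinity>)"
  proof (intro exI conjI)
    show "countable ?C"
      by simp
    show "?C \<subseteq> sets \<mu>"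
    proof
      fix X assume "X \<in> ?C"
      then obtain n :: nat where "X = cball 0 (real n)"
        by blast
      then show "X \<in> sets \<mu>"
        using sets borel_closed[OF closed_cball] by simp
    qed
    show "\<Union> ?C = space \<mu>"
      using sets_eq_imp_space_eq[OF sets] by (auto simp: real_arch_simple)
    have "\<And>K. compact K \<Longrightarrow> emeasure \<mu> K < \<top>"
      using assms by (simp add: radon_measure_def)
    then show "\<forall>a\<in>?C. emeasure \<mu> a \<noteq> \<infinity>"
      using compact_cball by (auto simp: less_top[symmetric])
  qed
qed

section \<open>One-regular measures\<close>

lemma exists_dyadic_scale:
  fixes x D :: real
  assumes "D > 0" and "D \<le> x"
  obtains k :: nat where "2^k * D \<le> x" and "x < 2^(Suc k) * D"
proof -
  obtain n :: nat where "x / D < 2 ^ n"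
    using real_arch_pow[of 2 "x/D"] by auto
  then have "x < 2^n * D"
    using assms by (simp add: field_simps)
  define n0 where "n0 = (LEAST n::nat. x < 2^n * D)"
  have n0: "x < 2^n0 * D"
    unfolding n0_def by (rule LeastI) fact
  then have "n0 \<noteq> 0"
    using assms by (intro notI) simp
  then obtain k where k: "n0 = Suc k"
    by (cases n0) auto
  have "\<not> x < 2^k * D"
    using not_less_Least[of k "\<lambda>n. x < 2^n * D"] k unfolding n0_def by simp
  then show ?thesis
    using that[of k] n0 k by (simp add: not_less)
qed

lemma inverse_square_le_dyadic_sum:
  assumes D: "D > 0"
  shows "indicator {p. D \<le> d q0 p} p * ennreal (1 / (d q0 p)\<^sup>2)
    \<le> (\<Sum>k. indicator (dball d q0 (2^(Suc k) * D)) p * ennreal (1 / (4^k * D\<^sup>2)))"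
    (is "_ \<le> (\<Sum>k. ?g k)")
proof (cases "D \<le> d q0 p")
  case True
  obtain k :: nat where k: "2^k * D \<le> d q0 p" "d q0 p < 2^(Suc k) * D"
    using exists_dyadic_scale[OF D True] by blast
  have "(2^k * D)\<^sup>2 \<le> (d q0 p)\<^sup>2"
    using k D by (intro power_mono) auto
  moreover have "(2^k * D)\<^sup>2 = 4^k * D\<^sup>2"
  proof -
    have "(4::real)^k = 2^k * 2^k"
      by (simp add: power_mult_distrib[symmetric])
    then show ?thesis
      by (simp add: power2_eq_square algebra_simps)
  qed
  moreover have "d q0 p > 0"
    using True D by linarith
  ultimately have "1 / (d q0 p)\<^sup>2 \<le> 1 / (4^k * D\<^sup>2)"
    using D by (intro divide_left_mono) auto
  then have "indicator {p. D \<le> d q0 p} p * ennreal (1 / (d q0 p)\<^sup>2) \<le> ?g k"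
    using True k unfolding dball_def by (auto intro: ennreal_leI)
  also have "\<dots> = (\<Sum>i\<in>{k}. ?g i)"
    by (subst sum.insert) (simp_all only: finite.emptyI empty_iff not_False_eq_True sum.empty add_0_right)
  also have "\<dots> \<le> (\<Sum>k. ?g k)"
    by (rule sum_le_suminf[OF summableI]) simp_all
  finally show ?thesis .
qed simp

locale one_regular_space = continuous_metric d for d :: "'a::euclidean_space \<Rightarrow> 'a \<Rightarrow> real" +
  fixes \<mu> :: "'a measure" and CR :: real
  assumes radon: "radon_measure \<mu>"
    and regular: "one_regular d \<mu> CR"
    and ddiam_dsupp_pos: "ddiam d (dsupp d \<mu>) > 0"
    \<comment> \<open>otherwise \<open>one_regular\<close> constrains no ball at all\<close>
begin

lemma sets_\<mu> [measurable_cong]: "sets \<mu> = sets borel"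
  using radon unfolding radon_measure_def by blast

lemma space_\<mu> [simp]: "space \<mu> = UNIV"
  using sets_eq_imp_space_eq[OF sets_\<mu>] by simp

lemma borel_measurable_\<mu>: "g \<in> borel_measurable borel \<Longrightarrow> g \<in> borel_measurable \<mu>"
  by (subst measurable_cong_sets[OF sets_\<mu> refl])

lemma CR_ge_1: "1 \<le> CR"
  using regular unfolding one_regular_def by blast

lemma AE_in_dsupp: "AE p in \<mu>. p \<in> dsupp d \<mu>"
  using open_Compl_dsupp(2)[OF radon] .

text \<open>Upper regularity extends to radii beyond the diameter of the support, which carries all the mass.\<close>

lemma emeasure_dball_le:
  assumes "p \<in> dsupp d \<mu>" and "r > 0"
  shows "emeasure \<mu> (dball d p r) \<le> ennreal (CR * r)"
proof (cases "ereal r \<le> ddiam d (dsupp d \<mu>)")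
  case True
  then show ?thesis
    using regular assms unfolding one_regular_def by blast
next
  case False
  then have "ddiam d (dsupp d \<mu>) \<noteq> \<infinity>"
    by auto
  then obtain D0 where D0: "ddiam d (dsupp d \<mu>) = ereal D0"
    using ddiam_dsupp_pos by (cases "ddiam d (dsupp d \<mu>)") auto
  have "0 < D0" "D0 < r"
    using False ddiam_dsupp_pos unfolding D0 by auto
  have "AE x in \<mu>. x \<in> dball d p r \<longrightarrow> x \<in> dball d p D0"
    using AE_in_dsupp
  proof eventually_elim
    case (elim x)
    then show ?case
      using le_ddiam[of p "dsupp d \<mu>" x d] assms(1) D0 by (simp add: dball_def)
  qed
  then have "emeasure \<mu> (dball d p r) \<le> emeasure \<mu> (dball d p D0)"
    by (rule emeasure_mono_AE) simp
  also have "\<dots> \<le> ennreal (CR * D0)"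
    using regular assms \<open>0 < D0\<close> D0 unfolding one_regular_def by auto
  also have "\<dots> \<le> ennreal (CR * r)"
    using \<open>D0 < r\<close> CR_ge_1 by (intro ennreal_leI) simp
  finally show ?thesis .
qed

lemma emeasure_singleton: "emeasure \<mu> {x} = 0"
proof (cases "x \<in> dsupp d \<mu>")
  case False
  have "AE y in \<mu>. y \<noteq> x"
    using AE_in_dsupp by eventually_elim (use False in auto)
  then show ?thesis
    using AE_iff_measurable[of "{x}" \<mu> "\<lambda>y. y \<noteq> x"] by simp
next
  case True
  have small: "emeasure \<mu> {x} \<le> ennreal (CR * r)" if "r > 0" for r
  proof -
    have "emeasure \<mu> {x} \<le> emeasure \<mu> (dball d x r)"
      by (rule emeasure_mono) (use that in \<open>auto simp: dball_def\<close>)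
    also have "\<dots> \<le> ennreal (CR * r)"
      by (rule emeasure_dball_le[OF True that])
    finally show ?thesis .
  qed
  have "emeasure \<mu> {x} \<noteq> \<infinity>"
    using small[of 1] by (auto simp: top_unique)
  then obtain m where m: "emeasure \<mu> {x} = ennreal m" "0 \<le> m"
    by (cases "emeasure \<mu> {x}") auto
  show ?thesis
  proof (rule ccontr)
    assume "emeasure \<mu> {x} \<noteq> 0"
    then have "m > 0"
      using m by auto
    then have "ennreal m \<le> ennreal (CR * (m / (2 * CR)))"
      using small[of "m / (2*CR)"] m CR_ge_1 by simp
    then have "m \<le> m / 2"
      using CR_ge_1 \<open>m > 0\<close> by (simp add: ennreal_le_iff)
    then show False
      using \<open>m > 0\<close> by simp
  qed
qed

text \<open>Sum over the dyadic annuli \<open>2\<^sup>k D \<le> d(q\<^sub>0,p) < 2\<^sup>k\<^sup>+\<^sup>1 D\<close>, each of measure at most \<open>C\<^sub>R 2\<^sup>k\<^sup>+\<^sup>1 D\<close>.\<close>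

lemma nn_integral_inverse_square_tail:
  assumes q0: "q0 \<in> dsupp d \<mu>" and D: "D > 0"
  shows "(\<integral>\<^sup>+ p. indicator {p. D \<le> d q0 p} p * ennreal (1 / (d q0 p)\<^sup>2) \<partial>\<mu>) \<le> ennreal (4 * CR / D)"
proof -
  have four_pow: "(4::real)^k = 2^k * 2^k" for k :: nat
    by (simp add: power_mult_distrib[symmetric])
  define g where "g k p = indicator (dball d q0 (2^(Suc k) * D)) p * ennreal (1 / (4^k * D\<^sup>2))" for k p
  have pointwise: "indicator {p. D \<le> d q0 p} p * ennreal (1 / (d q0 p)\<^sup>2) \<le> (\<Sum>k. g k p)" for p
    unfolding g_def by (rule inverse_square_le_dyadic_sum[OF D])
  have "(\<integral>\<^sup>+ p. indicator {p. D \<le> d q0 p} p * ennreal (1 / (d q0 p)\<^sup>2) \<partial>\<mu>) \<le> (\<integral>\<^sup>+ p. (\<Sum>k. g k p) \<partial>\<mu>)"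
    by (rule nn_integral_mono) (rule pointwise)
  also have "\<dots> = (\<Sum>k. \<integral>\<^sup>+ p. g k p \<partial>\<mu>)"
    by (rule nn_integral_suminf) (simp add: g_def)
  also have "\<dots> = (\<Sum>k. ennreal (1 / (4^k * D\<^sup>2)) * emeasure \<mu> (dball d q0 (2^(Suc k) * D)))"
    unfolding g_def by (subst mult.commute) (simp add: nn_integral_cmult_indicator)
  also have "\<dots> \<le> (\<Sum>k. ennreal (2 * CR / D * (1/2)^k))"
  proof (rule suminf_le[OF _ summableI summableI])
    fix k :: nat
    have "ennreal (1 / (4^k * D\<^sup>2)) * emeasure \<mu> (dball d q0 (2^(Suc k) * D))
        \<le> ennreal (1 / (4^k * D\<^sup>2)) * ennreal (CR * (2^(Suc k) * D))"
      by (intro mult_left_mono emeasure_dball_le q0) (use D in auto)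
    also have "\<dots> = ennreal (1 / (4^k * D\<^sup>2) * (CR * (2^(Suc k) * D)))"
      by (rule ennreal_mult[symmetric]) (use D CR_ge_1 in auto)
    also have "1 / (4^k * D\<^sup>2) * (CR * (2^(Suc k) * D)) = 2 * CR / D * (1/2)^k"
      unfolding four_pow using D by (simp add: field_simps power2_eq_square power_one_over)
    finally show "ennreal (1 / (4^k * D\<^sup>2)) * emeasure \<mu> (dball d q0 (2^(Suc k) * D))
        \<le> ennreal (2 * CR / D * (1/2)^k)" .
  qed
  also have "\<dots> = ennreal (\<Sum>k. 2 * CR / D * (1/2)^k)"
    using D CR_ge_1 by (intro suminf_ennreal2) (auto intro: summable_mult summable_geometric)
  also have "(\<Sum>k. 2 * CR / D * (1/2::real)^k) = 4 * CR / D"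
    by (subst suminf_mult[OF summable_geometric]) (auto simp: suminf_geometric)
  finally show ?thesis .
qed

end

section \<open>Square-integrable kernels\<close>

lemma ennreal_abs_integral_le: "ennreal \<bar>integral\<^sup>L M g\<bar> \<le> (\<integral>\<^sup>+ x. ennreal \<bar>g x\<bar> \<partial>M)"
proof (cases "integrable M g")
  case True
  then show ?thesis
    using integral_norm_bound_ennreal[OF True] by simp
qed (simp add: not_integrable_integral_eq)

lemma ennreal_power2_le:
  assumes "ennreal \<bar>g\<bar> \<le> X"
  shows "ennreal (g\<^sup>2) \<le> X\<^sup>2"
proof -
  have "ennreal (g\<^sup>2) = (ennreal \<bar>g\<bar>)\<^sup>2"
    by (simp add: ennreal_power)
  also have "\<dots> \<le> X\<^sup>2"
    using assms by (intro power_mono) auto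
  finally show ?thesis .
qed

lemma ennreal_power2_add_le: "ennreal ((x + y)\<^sup>2) \<le> 2 * ennreal (x\<^sup>2) + 2 * ennreal (y\<^sup>2)"
proof -
  have "(x + y)\<^sup>2 \<le> 2 * x\<^sup>2 + 2 * y\<^sup>2"
    using zero_le_power2[of "x - y"] by (simp add: power2_eq_square algebra_simps)
  then have "ennreal ((x + y)\<^sup>2) \<le> ennreal (2 * x\<^sup>2 + 2 * y\<^sup>2)"
    by (rule ennreal_leI)
  also have "\<dots> = ennreal (2 * x\<^sup>2) + ennreal (2 * y\<^sup>2)"
    by (rule ennreal_plus) simp_all
  also have "\<dots> = 2 * ennreal (x\<^sup>2) + 2 * ennreal (y\<^sup>2)"
    by (simp add: numeral_mult_ennreal)
  finally show ?thesis .
qed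

lemma nn_integral_abs_power2: "(\<integral>\<^sup>+ x. (ennreal \<bar>f x\<bar>)\<^sup>2 \<partial>M) = (\<integral>\<^sup>+ x. ennreal ((f x)\<^sup>2) \<partial>M)"
  by (rule nn_integral_cong) (simp add: ennreal_power)

lemma nn_integral_mult_less_top:
  assumes "a \<in> borel_measurable M" and "b \<in> borel_measurable M"
    and "(\<integral>\<^sup>+ x. (a x)\<^sup>2 \<partial>M) < \<top>" and "(\<integral>\<^sup>+ x. (b x)\<^sup>2 \<partial>M) < \<top>"
  shows "(\<integral>\<^sup>+ x. a x * b x \<partial>M) < \<top>"
proof -
  have "(\<integral>\<^sup>+ x. a x * b x \<partial>M)\<^sup>2 \<le> (\<integral>\<^sup>+ x. (a x)\<^sup>2 \<partial>M) * (\<integral>\<^sup>+ x. (b x)\<^sup>2 \<partial>M)"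
    by (rule Cauchy_Schwarz_nn_integral[OF assms(1,2)])
  also have "\<dots> < \<top>"
    using assms(3,4) by (simp add: ennreal_mult_less_top)
  finally show ?thesis
    by (metis less_top power_eq_top_ennreal zero_neq_numeral)
qed

text \<open>A kernel dominated by a product \<open>u(p) v(q)\<close> acts with operator norm at most \<open>\<parallel>u\<parallel>\<^sub>2 \<parallel>v\<parallel>\<^sub>2\<close>.\<close>

lemma nn_integral_rank_one_power2_le:
  assumes "u \<in> borel_measurable N" and "v \<in> borel_measurable M" and "b \<in> borel_measurable M"
  shows "(\<integral>\<^sup>+ p. (u p * (\<integral>\<^sup>+ q. v q * b q \<partial>M))\<^sup>2 \<partial>N)
    \<le> (\<integral>\<^sup>+ p. (u p)\<^sup>2 \<partial>N) * (\<integral>\<^sup>+ q. (v q)\<^sup>2 \<partial>M) * (\<integral>\<^sup>+ q. (b q)\<^sup>2 \<partial>M)"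
proof -
  have "(\<integral>\<^sup>+ p. (u p * (\<integral>\<^sup>+ q. v q * b q \<partial>M))\<^sup>2 \<partial>N)
      = (\<integral>\<^sup>+ p. (u p)\<^sup>2 \<partial>N) * (\<integral>\<^sup>+ q. v q * b q \<partial>M)\<^sup>2"
    unfolding power_mult_distrib by (rule nn_integral_multc) (use assms(1) in simp)
  also have "\<dots> \<le> (\<integral>\<^sup>+ p. (u p)\<^sup>2 \<partial>N) * ((\<integral>\<^sup>+ q. (v q)\<^sup>2 \<partial>M) * (\<integral>\<^sup>+ q. (b q)\<^sup>2 \<partial>M))"
    by (intro mult_left_mono Cauchy_Schwarz_nn_integral assms(2,3)) simp
  finally show ?thesis
    by (simp only: mult.assoc)
qed

section \<open>A support split into two separated pieces\<close>

locale separated_split = one_regular_space d \<mu> CR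
  for d :: "'a::euclidean_space \<Rightarrow> 'a \<Rightarrow> real" and \<mu> CR +
  fixes gmul :: "'a \<Rightarrow> 'a \<Rightarrow> 'a" and K :: "'a \<Rightarrow> real" and Bk :: real and A B' :: "'a set"
  assumes kernel_bound: "\<And>p q. p \<noteq> q \<Longrightarrow> \<bar>K (gmul (- q) p)\<bar> \<le> Bk / d p q"
    and kernel_measurable: "(\<lambda>z. K (gmul (- snd z) (fst z))) \<in> borel_measurable borel"
    and Bk_nonneg: "0 \<le> Bk"
    and dsupp_split: "dsupp d \<mu> = A \<union> B'"
    and bounded_B': "d_bounded d B'"
    and ddiam_le_ddist: "ddiam d B' \<le> ddist d A B'"
begin

lemma ddiam_B'_le: "p \<in> A \<Longrightarrow> q \<in> B' \<Longrightarrow> ddiam d B' \<le> ereal (d p q)"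
  using order_trans[OF ddiam_le_ddist ddist_le] .

lemma B'_singleton_if_common:
  assumes x: "x \<in> A" "x \<in> B'"
  shows "B' = {x}"
proof -
  have "ddiam d B' \<le> ereal 0"
    using ddiam_B'_le[OF x] by simp
  have "y = x" if "y \<in> B'" for y
  proof -
    have "ereal (d x y) \<le> ereal 0"
      using le_ddiam[OF x(2) that, of d] \<open>ddiam d B' \<le> ereal 0\<close> by (rule order_trans)
    then have "d x y = 0"
      using d_nonneg[of x y] by simp
    then show ?thesis
      using d_eq_0_iff by simp
  qed
  then show ?thesis
    using x(2) by blast
qed

lemma AE_not_in_both: "AE q in \<mu>. \<not> (q \<in> A \<and> q \<in> B')"
proof (cases "A \<inter> B' = {}")
  case False
  then obtain x where x: "x \<in> A" "x \<in> B'"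
    by auto
  have "{x} \<in> null_sets \<mu>"
    using emeasure_singleton[of x] by (simp add: null_sets_def)
  then show ?thesis
    by (rule AE_I') (use B'_singleton_if_common[OF x] in auto)
qed auto

lemma B'_cases: "B' = {} \<or> (\<exists>x. B' = {x}) \<or> (\<exists>q0 D. q0 \<in> B' \<and> D > 0 \<and> ddiam d B' = ereal D)"
proof (cases "\<exists>x y. x \<in> B' \<and> y \<in> B' \<and> x \<noteq> y")
  case False
  then show ?thesis
    by (metis all_not_in_conv empty_subsetI insert_subset subset_antisym subsetI singletonI singletonD)
next
  case True
  then obtain x y where xy: "x \<in> B'" "y \<in> B'" "x \<noteq> y"
    by auto
  obtain R where R: "\<forall>p\<in>B'. \<forall>q\<in>B'. d p q \<le> R"
    using bounded_B' unfolding d_bounded_def by auto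
  have upper: "ddiam d B' \<le> ereal R"
    unfolding ddiam_def using R by (auto intro!: SUP_least)
  have lower: "ereal (d x y) \<le> ddiam d B'"
    by (rule le_ddiam[OF xy(1,2)])
  have "0 < d x y"
    using d_nonneg[of x y] d_eq_0_iff[of x y] xy(3) by simp
  define D where "D = real_of_ereal (ddiam d B')"
  have "ddiam d B' = ereal D"
    unfolding D_def using upper lower by (cases "ddiam d B'") auto
  moreover have "D > 0"
    using lower \<open>0 < d x y\<close> calculation by simp
  ultimately show ?thesis
    using xy(1) by blast
qed

lemma sets_A_B' [measurable]: "A \<in> sets borel" "B' \<in> sets borel"
proof -
  have dsupp: "dsupp d \<mu> \<in> sets borel"
    using sets_dsupp[OF radon] .
  consider "B' = {}" | x where "B' = {x}" | q0 D where "q0 \<in> B'" "D > 0" "ddiam d B' = ereal D"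
    using B'_cases by blast
  then show B': "B' \<in> sets borel"
  proof cases
    case (3 q0 D)
    \<comment> \<open>\<open>B'\<close> is relatively open in the support: no point of \<open>A\<close> is within \<open>D\<close> of \<open>B'\<close>.\<close>
    define U where "U = (\<Union>q\<in>B'. {x. d q x < D})"
    have "B' = dsupp d \<mu> \<inter> U"
    proof
      show "B' \<subseteq> dsupp d \<mu> \<inter> U"
      proof
        fix x assume "x \<in> B'"
        moreover have "d x x < D"
          using \<open>D > 0\<close> by simp
        ultimately show "x \<in> dsupp d \<mu> \<inter> U"
          using dsupp_split unfolding U_def by blast
      qed
      show "dsupp d \<mu> \<inter> U \<subseteq> B'"
      proof
        fix x assume x: "x \<in> dsupp d \<mu> \<inter> U"
        then obtain q where q: "q \<in> B'" "d q x < D"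
          unfolding U_def by auto
        show "x \<in> B'"
        proof (rule ccontr)
          assume "x \<notin> B'"
          then have "x \<in> A"
            using x dsupp_split by auto
          then have "ereal D \<le> ereal (d x q)"
            using ddiam_B'_le[OF \<open>x \<in> A\<close> q(1)] 3(3) by simp
          then show False
            using q(2) d_sym[of x q] by simp
        qed
      qed
    qed
    moreover have "open U"
      unfolding U_def using open_ball_d by blast
    ultimately show ?thesis
      using dsupp by simp
  qed (simp_all add: borel_closed finite_imp_closed)
  have "A = (dsupp d \<mu> - B') \<union> (A \<inter> B')"
    using dsupp_split by auto
  moreover have "A \<inter> B' \<in> sets borel"
  proof (cases "A \<inter> B' = {}")
    case False
    then obtain x where "x \<in> A" "x \<in> B'"
      by auto
    then have "A \<inter> B' = {x}"
      using B'_singleton_if_common by auto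
    then show ?thesis
      by simp
  qed simp
  ultimately show "A \<in> sets borel"
    using dsupp B' by (metis sets.Diff sets.Un)
qed

lemma separated_center:
  assumes "emeasure \<mu> B' \<noteq> 0"
  obtains q0 D where "q0 \<in> dsupp d \<mu>" "D > 0" "emeasure \<mu> B' \<le> ennreal (CR * D)"
    "\<And>p. p \<in> A \<Longrightarrow> D \<le> d q0 p"
    "\<And>p q. p \<in> A \<Longrightarrow> q \<in> B' \<Longrightarrow> d q0 p \<le> 2 * d p q"
proof -
  consider "B' = {}" | x where "B' = {x}" | q0 D where "q0 \<in> B'" "D > 0" "ddiam d B' = ereal D"
    using B'_cases by blast
  then show ?thesis
  proof cases
    case (3 q0 D)
    have diam: "d p q \<le> D" if "p \<in> B'" "q \<in> B'" for p q
      using le_ddiam[OF that, of d] 3(3) by simp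
    have dist: "D \<le> d p q" if "p \<in> A" "q \<in> B'" for p q
      using ddiam_B'_le[OF that] 3(3) by simp
    have "B' \<subseteq> dball d q0 D"
      using diam 3(1) by (auto simp: dball_def)
    then have "emeasure \<mu> B' \<le> emeasure \<mu> (dball d q0 D)"
      by (rule emeasure_mono) simp
    also have "\<dots> \<le> ennreal (CR * D)"
      using 3(1,2) dsupp_split by (intro emeasure_dball_le) auto
    finally have measure_B': "emeasure \<mu> B' \<le> ennreal (CR * D)" .
    have center: "d q0 p \<le> 2 * d p q" if "p \<in> A" "q \<in> B'" for p q
      using d_triangle[of q0 p q] diam[OF 3(1) that(2)] dist[OF that] d_sym[of q p] by linarith
    have far: "D \<le> d q0 p" if "p \<in> A" for p
      using dist[OF that 3(1)] d_sym[of p q0] by simp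
    have "q0 \<in> dsupp d \<mu>"
      using 3(1) dsupp_split by simp
    from that[OF this 3(2) measure_B' far center] show ?thesis .
  qed (use assms emeasure_singleton in auto)
qed

definition trunc_kernel :: "real \<Rightarrow> ('a \<Rightarrow> real) \<Rightarrow> 'a \<Rightarrow> 'a \<Rightarrow> real" where
  "trunc_kernel \<epsilon> f p q = indicator {q. d p q > \<epsilon>} q * K (gmul (- q) p) * f q"

text \<open>\<open>partial_SIO \<epsilon> f W\<close> is \<open>T\<^bsub>\<mu>|W,\<epsilon>\<^esub> f\<close>, see \<open>trunc_SIO_restr_measure\<close>.\<close>

definition partial_SIO :: "real \<Rightarrow> ('a \<Rightarrow> real) \<Rightarrow> 'a set \<Rightarrow> 'a \<Rightarrow> real" where
  "partial_SIO \<epsilon> f W p = (\<integral>q. indicator W q * trunc_kernel \<epsilon> f p q \<partial>\<mu>)"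

lemma sets_pair_\<mu>: "sets (\<mu> \<Otimes>\<^sub>M \<mu>) = sets borel"
proof -
  have "sets (\<mu> \<Otimes>\<^sub>M \<mu>) = sets (borel \<Otimes>\<^sub>M borel)"
    by (rule sets_pair_measure_cong[OF sets_\<mu> sets_\<mu>])
  also have "\<dots> = sets borel"
    using borel_prod[where 'a='a and 'b='a] by (rule arg_cong)
  finally show ?thesis .
qed

lemma trunc_kernel_measurable:
  assumes f: "f \<in> borel_measurable borel"
  shows "(\<lambda>z. trunc_kernel \<epsilon> f (fst z) (snd z)) \<in> borel_measurable borel"
proof -
  have "open {z::'a \<times> 'a. \<epsilon> < d (fst z) (snd z)}"
    by (rule open_Collect_less) (auto intro: continuous_d)
  then have "indicator {z::'a \<times> 'a. \<epsilon> < d (fst z) (snd z)} \<in> borel_measurable borel"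
    by (intro borel_measurable_indicator borel_open)
  moreover have "(\<lambda>z::'a \<times> 'a. indicator {q. d (fst z) q > \<epsilon>} (snd z) :: real)
      = indicator {z. \<epsilon> < d (fst z) (snd z)}"
    by (auto simp: indicator_def)
  ultimately have indicator: "(\<lambda>z::'a \<times> 'a. indicator {q. d (fst z) q > \<epsilon>} (snd z) :: real)
      \<in> borel_measurable borel"
    by simp
  have "(\<lambda>z::'a \<times> 'a. f (snd z)) \<in> borel_measurable borel"
    using measurable_compose[OF borel_measurable_continuous_onI[OF continuous_on_snd[OF continuous_on_id]] f] .
  then show ?thesis
    unfolding trunc_kernel_def by (intro borel_measurable_times indicator kernel_measurable)
qed

lemma trunc_kernel_measurable_snd:
  assumes "f \<in> borel_measurable borel"
  shows "trunc_kernel \<epsilon> f p \<in> borel_measurable borel"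
proof -
  have "(\<lambda>q. trunc_kernel \<epsilon> f (fst (p, q)) (snd (p, q))) \<in> borel_measurable borel"
    by (rule measurable_compose[OF _ trunc_kernel_measurable[OF assms]]) simp
  then show ?thesis
    by simp
qed

lemma partial_SIO_measurable:
  assumes f: "f \<in> borel_measurable borel" and W: "W \<in> sets borel"
  shows "partial_SIO \<epsilon> f W \<in> borel_measurable borel"
proof -
  interpret sigma_finite_measure \<mu>
    using radon_measure_sigma_finite[OF radon] .
  have "(\<lambda>z::'a \<times> 'a. indicator W (snd z)) \<in> borel_measurable borel"
    using measurable_compose[OF borel_measurable_continuous_onI[OF continuous_on_snd[OF continuous_on_id]]
        borel_measurable_indicator[OF W]] .
  then have "(\<lambda>z. indicator W (snd z) * trunc_kernel \<epsilon> f (fst z) (snd z)) \<in> borel_measurable borel"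
    by (intro borel_measurable_times trunc_kernel_measurable[OF f])
  then have "(\<lambda>(p, q). indicator W q * trunc_kernel \<epsilon> f p q) \<in> borel_measurable (\<mu> \<Otimes>\<^sub>M \<mu>)"
    by (subst measurable_cong_sets[OF sets_pair_\<mu> refl]) (simp add: case_prod_beta')
  then have "(\<lambda>p. \<integral>q. indicator W q * trunc_kernel \<epsilon> f p q \<partial>\<mu>) \<in> borel_measurable \<mu>"
    by (rule borel_measurable_lebesgue_integral)
  then show ?thesis
    unfolding partial_SIO_def by (subst (asm) measurable_cong_sets[OF sets_\<mu> refl])
qed

lemma trunc_SIO_eq: "trunc_SIO gmul d K \<mu> \<epsilon> f p = (\<integral>q. trunc_kernel \<epsilon> f p q \<partial>\<mu>)"
  unfolding trunc_SIO_def trunc_kernel_def ..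

lemma restr_measure_eq_density: "restr_measure \<mu> W = density \<mu> (\<lambda>x. ennreal (indicator W x))"
proof -
  have "(\<lambda>x. ennreal (indicator W x)) = indicator W"
    by (auto simp: indicator_def fun_eq_iff)
  then show ?thesis
    unfolding restr_measure_def by simp
qed

lemma trunc_SIO_restr_measure:
  assumes f: "f \<in> borel_measurable borel" and W: "W \<in> sets borel"
  shows "trunc_SIO gmul d K (restr_measure \<mu> W) \<epsilon> f p = partial_SIO \<epsilon> f W p"
proof -
  have "trunc_SIO gmul d K (restr_measure \<mu> W) \<epsilon> f p
      = (\<integral>q. trunc_kernel \<epsilon> f p q \<partial>(restr_measure \<mu> W))"
    unfolding trunc_SIO_def trunc_kernel_def ..
  also have "\<dots> = (\<integral>q. indicator W q *\<^sub>R trunc_kernel \<epsilon> f p q \<partial>\<mu>)"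
    unfolding restr_measure_eq_density
    by (rule integral_density) (use W borel_measurable_\<mu>[OF trunc_kernel_measurable_snd[OF f]] in auto)
  finally show ?thesis
    by (simp add: partial_SIO_def)
qed

lemma abs_trunc_kernel_le:
  assumes "\<epsilon> > 0"
  shows "\<bar>trunc_kernel \<epsilon> f p q\<bar> \<le> indicator {q. d p q > \<epsilon>} q * (Bk / d p q) * \<bar>f q\<bar>"
proof (cases "d p q > \<epsilon>")
  case True
  then have "p \<noteq> q"
    using assms by auto
  then have "\<bar>K (gmul (- q) p)\<bar> \<le> Bk / d p q"
    by (rule kernel_bound)
  then have "\<bar>K (gmul (- q) p)\<bar> * \<bar>f q\<bar> \<le> (Bk / d p q) * \<bar>f q\<bar>"
    by (rule mult_right_mono) simp
  then show ?thesis
    using True unfolding trunc_kernel_def by (simp add: abs_mult)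
qed (simp add: trunc_kernel_def)

text \<open>The truncated kernel at \<open>p\<close> is square integrable by the tail estimate, so \<open>T\<^sub>\<mu>\<^sub>,\<^sub>\<epsilon> f(p)\<close>
  is an absolutely convergent integral.\<close>

lemma integrable_trunc_kernel:
  assumes f: "f \<in> borel_measurable borel" and f2: "(\<integral>\<^sup>+ q. ennreal ((f q)\<^sup>2) \<partial>\<mu>) < \<infinity>"
    and \<epsilon>: "\<epsilon> > 0" and p: "p \<in> dsupp d \<mu>"
  shows "integrable \<mu> (trunc_kernel \<epsilon> f p)"
proof -
  define a where "a q = ennreal (indicator {q. d p q > \<epsilon>} q * (Bk / d p q))" for q
  have a_measurable: "a \<in> borel_measurable \<mu>"
    unfolding a_def by (intro borel_measurable_\<mu>) measurable
  have f_abs: "(\<lambda>q. ennreal \<bar>f q\<bar>) \<in> borel_measurable \<mu>"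
    using f by (intro borel_measurable_\<mu>) measurable
  have dominated: "ennreal (norm (trunc_kernel \<epsilon> f p q)) \<le> a q * ennreal \<bar>f q\<bar>" for q
  proof -
    have "0 \<le> indicator {q. d p q > \<epsilon>} q * (Bk / d p q)"
      using Bk_nonneg d_nonneg[of p q] by simp
    then have "ennreal (indicator {q. d p q > \<epsilon>} q * (Bk / d p q) * \<bar>f q\<bar>) = a q * ennreal \<bar>f q\<bar>"
      unfolding a_def by (rule ennreal_mult')
    then show ?thesis
      using abs_trunc_kernel_le[OF \<epsilon>, of f p q] by (metis ennreal_leI real_norm_def)
  qed
  have a2: "(a q)\<^sup>2 \<le> ennreal (Bk\<^sup>2) * (indicator {q. \<epsilon> \<le> d p q} q * ennreal (1 / (d p q)\<^sup>2))" for q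
  proof (cases "d p q > \<epsilon>")
    case True
    have "(a q)\<^sup>2 = ennreal ((Bk / d p q)\<^sup>2)"
      unfolding a_def using True Bk_nonneg d_nonneg[of p q] by (simp add: ennreal_power)
    also have "\<dots> = ennreal (Bk\<^sup>2) * ennreal (1 / (d p q)\<^sup>2)"
      by (simp add: power_divide ennreal_mult[symmetric])
    finally show ?thesis
      using True by simp
  qed (simp add: a_def)
  have "(\<integral>\<^sup>+ q. (a q)\<^sup>2 \<partial>\<mu>)
      \<le> (\<integral>\<^sup>+ q. ennreal (Bk\<^sup>2) * (indicator {q. \<epsilon> \<le> d p q} q * ennreal (1 / (d p q)\<^sup>2)) \<partial>\<mu>)"
    by (intro nn_integral_mono a2)
  also have "\<dots> = ennreal (Bk\<^sup>2) * (\<integral>\<^sup>+ q. indicator {q. \<epsilon> \<le> d p q} q * ennreal (1 / (d p q)\<^sup>2) \<partial>\<mu>)"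
    by (rule nn_integral_cmult) (intro borel_measurable_\<mu>, measurable)
  also have "\<dots> \<le> ennreal (Bk\<^sup>2) * ennreal (4 * CR / \<epsilon>)"
    by (intro mult_left_mono nn_integral_inverse_square_tail p \<epsilon>) simp
  finally have "(\<integral>\<^sup>+ q. (a q)\<^sup>2 \<partial>\<mu>) < \<top>"
    by (simp add: le_less_trans ennreal_mult_less_top top.not_eq_extremum)
  moreover have "(\<integral>\<^sup>+ q. (ennreal \<bar>f q\<bar>)\<^sup>2 \<partial>\<mu>) < \<top>"
    using f2 by (simp add: nn_integral_abs_power2)
  ultimately have "(\<integral>\<^sup>+ q. a q * ennreal \<bar>f q\<bar> \<partial>\<mu>) < \<top>"
    by (rule nn_integral_mult_less_top[OF a_measurable f_abs])
  moreover have "(\<integral>\<^sup>+ q. ennreal (norm (trunc_kernel \<epsilon> f p q)) \<partial>\<mu>) \<le> (\<integral>\<^sup>+ q. a q * ennreal \<bar>f q\<bar> \<partial>\<mu>)"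
    by (intro nn_integral_mono dominated)
  ultimately have "(\<integral>\<^sup>+ q. ennreal (norm (trunc_kernel \<epsilon> f p q)) \<partial>\<mu>) < \<infinity>"
    by (simp add: le_less_trans)
  then show ?thesis
    using f by (intro integrableI_bounded borel_measurable_\<mu> trunc_kernel_measurable_snd)
qed

lemma trunc_SIO_split:
  assumes f: "f \<in> borel_measurable borel" and f2: "(\<integral>\<^sup>+ q. ennreal ((f q)\<^sup>2) \<partial>\<mu>) < \<infinity>"
    and \<epsilon>: "\<epsilon> > 0" and p: "p \<in> dsupp d \<mu>"
  shows "trunc_SIO gmul d K \<mu> \<epsilon> f p = partial_SIO \<epsilon> f A p + partial_SIO \<epsilon> f B' p"
proof -
  have int: "integrable \<mu> (trunc_kernel \<epsilon> f p)"
    by (rule integrable_trunc_kernel[OF f f2 \<epsilon> p])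
  have int_A: "integrable \<mu> (\<lambda>q. indicator A q * trunc_kernel \<epsilon> f p q)"
    using integrable_mult_indicator[OF _ int, of A] by simp
  have int_B': "integrable \<mu> (\<lambda>q. indicator B' q * trunc_kernel \<epsilon> f p q)"
    using integrable_mult_indicator[OF _ int, of B'] by simp
  have ae: "AE q in \<mu>. trunc_kernel \<epsilon> f p q
      = indicator A q * trunc_kernel \<epsilon> f p q + indicator B' q * trunc_kernel \<epsilon> f p q"
    using AE_in_dsupp AE_not_in_both by eventually_elim (use dsupp_split in \<open>auto simp: indicator_def\<close>)
  have "trunc_SIO gmul d K \<mu> \<epsilon> f p
      = (\<integral>q. indicator A q * trunc_kernel \<epsilon> f p q + indicator B' q * trunc_kernel \<epsilon> f p q \<partial>\<mu>)"
    unfolding trunc_SIO_eq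
    by (rule integral_cong_AE) (use ae int int_A int_B' in \<open>auto intro!: borel_measurable_add borel_measurable_integrable\<close>)
  also have "\<dots> = partial_SIO \<epsilon> f A p + partial_SIO \<epsilon> f B' p"
    unfolding partial_SIO_def by (rule Bochner_Integration.integral_add[OF int_A int_B'])
  finally show ?thesis .
qed

lemma partial_SIO_diagonal_bound:
  assumes W: "W \<in> sets borel" and bounded: "SIO_bounded gmul d K (restr_measure \<mu> W) C"
    and f: "f \<in> borel_measurable borel" and f2: "(\<integral>\<^sup>+ q. ennreal ((f q)\<^sup>2) \<partial>\<mu>) < \<infinity>"
    and \<epsilon>: "\<epsilon> > 0"
  shows "(\<integral>\<^sup>+ p. indicator W p * ennreal ((partial_SIO \<epsilon> f W p)\<^sup>2) \<partial>\<mu>)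
    \<le> ennreal (C\<^sup>2) * (\<integral>\<^sup>+ q. ennreal ((f q)\<^sup>2) \<partial>\<mu>)"
proof -
  let ?\<nu> = "restr_measure \<mu> W"
  have \<nu>: "?\<nu> = density \<mu> (\<lambda>x. ennreal (indicator W x))"
    by (rule restr_measure_eq_density)
  have restr_integral: "(\<integral>\<^sup>+ p. g p \<partial>?\<nu>) = (\<integral>\<^sup>+ p. indicator W p * g p \<partial>\<mu>)"
    if "g \<in> borel_measurable borel" for g
    unfolding \<nu> using W that
    by (subst nn_integral_density) (auto intro!: nn_integral_cong borel_measurable_\<mu> simp: indicator_def)
  have f2_restr: "(\<integral>\<^sup>+ q. ennreal ((f q)\<^sup>2) \<partial>?\<nu>) \<le> (\<integral>\<^sup>+ q. ennreal ((f q)\<^sup>2) \<partial>\<mu>)"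
    unfolding restr_integral[OF borel_measurable_power[OF f, THEN measurable_compose[OF _ measurable_ennreal]]]
    by (intro nn_integral_mono) (simp add: indicator_def)
  have "f \<in> borel_measurable ?\<nu>"
    using f by (simp add: \<nu> measurable_cong_sets[OF sets_\<mu> refl])
  then have "(\<integral>\<^sup>+ p. ennreal ((trunc_SIO gmul d K ?\<nu> \<epsilon> f p)\<^sup>2) \<partial>?\<nu>)
      \<le> ennreal (C\<^sup>2) * (\<integral>\<^sup>+ q. ennreal ((f q)\<^sup>2) \<partial>?\<nu>)"
    using bounded \<epsilon> f2_restr f2 unfolding SIO_bounded_def by (meson le_less_trans)
  moreover have "(\<integral>\<^sup>+ p. ennreal ((trunc_SIO gmul d K ?\<nu> \<epsilon> f p)\<^sup>2) \<partial>?\<nu>)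
      = (\<integral>\<^sup>+ p. indicator W p * ennreal ((partial_SIO \<epsilon> f W p)\<^sup>2) \<partial>\<mu>)"
    unfolding trunc_SIO_restr_measure[OF f W]
    using partial_SIO_measurable[OF f W] by (intro restr_integral) measurable
  ultimately show ?thesis
    using f2_restr by (metis (no_types, lifting) mult_left_mono order_trans zero_le)
qed

lemma partial_SIO_off_diagonal_bound:
  assumes W: "W1 \<in> sets borel" "W2 \<in> sets borel"
    and u: "u \<in> borel_measurable \<mu>" and v: "v \<in> borel_measurable \<mu>" and f: "f \<in> borel_measurable borel"
    and dominated: "\<And>p q. p \<in> W1 \<Longrightarrow> q \<in> W2 \<Longrightarrow>
      ennreal \<bar>trunc_kernel \<epsilon> f p q\<bar> \<le> u p * (v q * ennreal \<bar>f q\<bar>)"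
  shows "(\<integral>\<^sup>+ p. indicator W1 p * ennreal ((partial_SIO \<epsilon> f W2 p)\<^sup>2) \<partial>\<mu>)
    \<le> (\<integral>\<^sup>+ p. (u p)\<^sup>2 \<partial>\<mu>) * (\<integral>\<^sup>+ q. (v q)\<^sup>2 \<partial>\<mu>) * (\<integral>\<^sup>+ q. ennreal ((f q)\<^sup>2) \<partial>\<mu>)"
proof -
  have f_abs: "(\<lambda>q. ennreal \<bar>f q\<bar>) \<in> borel_measurable \<mu>"
    using f by (intro borel_measurable_\<mu>) measurable
  have pointwise: "indicator W1 p * ennreal ((partial_SIO \<epsilon> f W2 p)\<^sup>2)
      \<le> (u p * (\<integral>\<^sup>+ q. v q * ennreal \<bar>f q\<bar> \<partial>\<mu>))\<^sup>2" for p
  proof (cases "p \<in> W1")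
    case True
    have "ennreal \<bar>partial_SIO \<epsilon> f W2 p\<bar>
        \<le> (\<integral>\<^sup>+ q. ennreal \<bar>indicator W2 q * trunc_kernel \<epsilon> f p q\<bar> \<partial>\<mu>)"
      unfolding partial_SIO_def by (rule ennreal_abs_integral_le)
    also have "\<dots> \<le> (\<integral>\<^sup>+ q. u p * (v q * ennreal \<bar>f q\<bar>) \<partial>\<mu>)"
      using dominated[OF True] by (intro nn_integral_mono) (simp add: indicator_def)
    also have "\<dots> = u p * (\<integral>\<^sup>+ q. v q * ennreal \<bar>f q\<bar> \<partial>\<mu>)"
      using v f_abs by (intro nn_integral_cmult) simp
    finally show ?thesis
      using True by (simp add: ennreal_power2_le)
  qed simp
  have "(\<integral>\<^sup>+ p. indicator W1 p * ennreal ((partial_SIO \<epsilon> f W2 p)\<^sup>2) \<partial>\<mu>)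
      \<le> (\<integral>\<^sup>+ p. (u p * (\<integral>\<^sup>+ q. v q * ennreal \<bar>f q\<bar> \<partial>\<mu>))\<^sup>2 \<partial>\<mu>)"
    by (intro nn_integral_mono pointwise)
  also have "\<dots> \<le> (\<integral>\<^sup>+ p. (u p)\<^sup>2 \<partial>\<mu>) * (\<integral>\<^sup>+ q. (v q)\<^sup>2 \<partial>\<mu>) * (\<integral>\<^sup>+ q. (ennreal \<bar>f q\<bar>)\<^sup>2 \<partial>\<mu>)"
    by (rule nn_integral_rank_one_power2_le[OF u v f_abs])
  finally show ?thesis
    by (simp only: nn_integral_abs_power2)
qed

text \<open>For \<open>p \<in> A\<close> and \<open>q \<in> B'\<close> the kernel is at most \<open>2B/d(q\<^sub>0,p)\<close>, see \<open>separated_center\<close>.\<close>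

definition separation_weight :: "'a \<Rightarrow> real \<Rightarrow> 'a \<Rightarrow> ennreal" where
  "separation_weight q0 D p = ennreal (2 * Bk * (indicator {p. D \<le> d q0 p} p / d q0 p))"

lemma abs_trunc_kernel_le_separation_weight:
  assumes \<epsilon>: "\<epsilon> > 0" and D: "D > 0"
    and far: "\<And>p. p \<in> A \<Longrightarrow> D \<le> d q0 p"
    and center: "\<And>p q. p \<in> A \<Longrightarrow> q \<in> B' \<Longrightarrow> d q0 p \<le> 2 * d p q"
    and a: "a \<in> A" and b: "b \<in> B'" and same_distance: "d p q = d a b"
  shows "ennreal \<bar>trunc_kernel \<epsilon> f p q\<bar> \<le> separation_weight q0 D a * ennreal \<bar>f q\<bar>"
proof -
  have "0 < d q0 a"
    using far[OF a] D by linarith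
  have "\<bar>trunc_kernel \<epsilon> f p q\<bar> \<le> indicator {q. d p q > \<epsilon>} q * (Bk / d p q) * \<bar>f q\<bar>"
    by (rule abs_trunc_kernel_le[OF \<epsilon>])
  also have "\<dots> \<le> (Bk / d a b) * \<bar>f q\<bar>"
    using Bk_nonneg d_nonneg[of p q] same_distance by (simp add: indicator_def)
  also have "Bk / d a b = 2 * Bk / (2 * d a b)"
    by simp
  also have "\<dots> \<le> 2 * Bk / d q0 a"
    using Bk_nonneg center[OF a b] \<open>0 < d q0 a\<close> by (intro divide_left_mono) auto
  finally have "\<bar>trunc_kernel \<epsilon> f p q\<bar> \<le> 2 * Bk / d q0 a * \<bar>f q\<bar>"
    by (simp add: mult_right_mono)
  moreover have "separation_weight q0 D a = ennreal (2 * Bk / d q0 a)"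
    unfolding separation_weight_def using far[OF a] by simp
  ultimately show ?thesis
    using Bk_nonneg \<open>0 < d q0 a\<close> by (simp add: ennreal_mult'[symmetric] ennreal_leI)
qed

lemma separation_weight_measurable: "separation_weight q0 D \<in> borel_measurable \<mu>"
  unfolding separation_weight_def by (intro borel_measurable_\<mu>) measurable

lemma separation_weight_hilbert_schmidt:
  assumes q0: "q0 \<in> dsupp d \<mu>" and D: "D > 0" and B': "emeasure \<mu> B' \<le> ennreal (CR * D)"
  shows "(\<integral>\<^sup>+ p. (separation_weight q0 D p)\<^sup>2 \<partial>\<mu>) * (\<integral>\<^sup>+ q. (ennreal (indicator B' q))\<^sup>2 \<partial>\<mu>)
    \<le> ennreal (16 * Bk\<^sup>2 * CR\<^sup>2)"
proof -
  have weight2: "(separation_weight q0 D p)\<^sup>2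
      = ennreal (4 * Bk\<^sup>2) * (indicator {p. D \<le> d q0 p} p * ennreal (1 / (d q0 p)\<^sup>2))" for p
  proof (cases "D \<le> d q0 p")
    case True
    then have "(separation_weight q0 D p)\<^sup>2 = ennreal ((2 * Bk / d q0 p)\<^sup>2)"
      unfolding separation_weight_def using Bk_nonneg D by (simp add: ennreal_power)
    also have "\<dots> = ennreal (4 * Bk\<^sup>2) * ennreal (1 / (d q0 p)\<^sup>2)"
      by (simp add: power_divide ennreal_mult[symmetric] power_mult_distrib)
    finally show ?thesis
      using True by simp
  qed (simp add: separation_weight_def)
  have "(ennreal (indicator B' q))\<^sup>2 = indicator B' q" for q
    by (simp add: indicator_def)
  then have B'_square: "(\<integral>\<^sup>+ q. (ennreal (indicator B' q))\<^sup>2 \<partial>\<mu>) = emeasure \<mu> B'"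
    by simp
  have "(\<integral>\<^sup>+ p. (separation_weight q0 D p)\<^sup>2 \<partial>\<mu>)
      = ennreal (4 * Bk\<^sup>2) * (\<integral>\<^sup>+ p. indicator {p. D \<le> d q0 p} p * ennreal (1 / (d q0 p)\<^sup>2) \<partial>\<mu>)"
    unfolding weight2 by (rule nn_integral_cmult) (intro borel_measurable_\<mu>, measurable)
  also have "\<dots> \<le> ennreal (4 * Bk\<^sup>2) * ennreal (4 * CR / D)"
    by (intro mult_left_mono nn_integral_inverse_square_tail q0 D) simp
  finally have "(\<integral>\<^sup>+ p. (separation_weight q0 D p)\<^sup>2 \<partial>\<mu>) * (\<integral>\<^sup>+ q. (ennreal (indicator B' q))\<^sup>2 \<partial>\<mu>)
      \<le> ennreal (4 * Bk\<^sup>2) * ennreal (4 * CR / D) * ennreal (CR * D)"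
    using B' B'_square by (intro mult_mono) simp_all
  also have "ennreal (4 * Bk\<^sup>2) * ennreal (4 * CR / D) = ennreal (4 * Bk\<^sup>2 * (4 * CR / D))"
    by (rule ennreal_mult[symmetric]) (use D CR_ge_1 in auto)
  also have "\<dots> * ennreal (CR * D) = ennreal (4 * Bk\<^sup>2 * (4 * CR / D) * (CR * D))"
    by (rule ennreal_mult[symmetric]) (use D CR_ge_1 in auto)
  also have "4 * Bk\<^sup>2 * (4 * CR / D) * (CR * D) = 16 * Bk\<^sup>2 * CR\<^sup>2"
    using D by (simp add: field_simps power2_eq_square)
  finally show ?thesis .
qed

lemma partial_SIO_cross_bound:
  assumes W: "(W1, W2) = (A, B') \<or> (W1, W2) = (B', A)"
    and f: "f \<in> borel_measurable borel" and \<epsilon>: "\<epsilon> > 0"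
  shows "(\<integral>\<^sup>+ p. indicator W1 p * ennreal ((partial_SIO \<epsilon> f W2 p)\<^sup>2) \<partial>\<mu>)
    \<le> ennreal (16 * Bk\<^sup>2 * CR\<^sup>2) * (\<integral>\<^sup>+ q. ennreal ((f q)\<^sup>2) \<partial>\<mu>)"
proof (cases "emeasure \<mu> B' = 0")
  case True
  then have null: "AE x in \<mu>. x \<notin> B'"
    by (intro AE_not_in null_setsI) simp_all
  have vanish: "partial_SIO \<epsilon> f B' p = 0" for p
  proof -
    have "AE q in \<mu>. indicator B' q * trunc_kernel \<epsilon> f p q = 0"
      using null by eventually_elim simp
    then show ?thesis
      unfolding partial_SIO_def by (rule integral_eq_zero_AE)
  qed
  have "AE p in \<mu>. indicator W1 p * ennreal ((partial_SIO \<epsilon> f W2 p)\<^sup>2) = 0"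
    using null by eventually_elim (use W vanish in auto)
  then have "(\<integral>\<^sup>+ p. indicator W1 p * ennreal ((partial_SIO \<epsilon> f W2 p)\<^sup>2) \<partial>\<mu>) = (\<integral>\<^sup>+ p. 0 \<partial>\<mu>)"
    by (rule nn_integral_cong_AE)
  then show ?thesis
    by simp
next
  case False
  obtain q0 D where q0: "q0 \<in> dsupp d \<mu>" and D: "D > 0" and B': "emeasure \<mu> B' \<le> ennreal (CR * D)"
    and far: "\<And>p. p \<in> A \<Longrightarrow> D \<le> d q0 p"
    and center: "\<And>p q. p \<in> A \<Longrightarrow> q \<in> B' \<Longrightarrow> d q0 p \<le> 2 * d p q"
    using separated_center[OF False] by blast
  let ?w = "separation_weight q0 D"
  have B'_measurable: "(\<lambda>q. ennreal (indicator B' q)) \<in> borel_measurable \<mu>"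
    by (intro borel_measurable_\<mu>) measurable
  note dominated = abs_trunc_kernel_le_separation_weight[OF \<epsilon> D far center]
  note hilbert_schmidt = separation_weight_hilbert_schmidt[OF q0 D B']
  from W consider "W1 = A" "W2 = B'" | "W1 = B'" "W2 = A"
    by blast
  then show ?thesis
  proof cases
    case 1
    have "(\<integral>\<^sup>+ p. indicator A p * ennreal ((partial_SIO \<epsilon> f B' p)\<^sup>2) \<partial>\<mu>)
        \<le> (\<integral>\<^sup>+ p. (?w p)\<^sup>2 \<partial>\<mu>) * (\<integral>\<^sup>+ q. (ennreal (indicator B' q))\<^sup>2 \<partial>\<mu>) * (\<integral>\<^sup>+ q. ennreal ((f q)\<^sup>2) \<partial>\<mu>)"
      using dominated
      by (intro partial_SIO_off_diagonal_bound sets_A_B' separation_weight_measurable B'_measurable f) simp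
    also have "\<dots> \<le> ennreal (16 * Bk\<^sup>2 * CR\<^sup>2) * (\<integral>\<^sup>+ q. ennreal ((f q)\<^sup>2) \<partial>\<mu>)"
      by (intro mult_right_mono hilbert_schmidt) simp
    finally show ?thesis
      using 1 by simp
  next
    case 2
    have "(\<integral>\<^sup>+ p. indicator B' p * ennreal ((partial_SIO \<epsilon> f A p)\<^sup>2) \<partial>\<mu>)
        \<le> (\<integral>\<^sup>+ p. (ennreal (indicator B' p))\<^sup>2 \<partial>\<mu>) * (\<integral>\<^sup>+ q. (?w q)\<^sup>2 \<partial>\<mu>) * (\<integral>\<^sup>+ q. ennreal ((f q)\<^sup>2) \<partial>\<mu>)"
      using dominated d_sym
      by (intro partial_SIO_off_diagonal_bound sets_A_B' separation_weight_measurable B'_measurable f) simp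
    also have "\<dots> \<le> ennreal (16 * Bk\<^sup>2 * CR\<^sup>2) * (\<integral>\<^sup>+ q. ennreal ((f q)\<^sup>2) \<partial>\<mu>)"
      using hilbert_schmidt by (intro mult_right_mono) (simp_all add: mult.commute)
    finally show ?thesis
      using 2 by simp
  qed
qed

lemma AE_trunc_SIO_power2_le:
  assumes f: "f \<in> borel_measurable borel" and f2: "(\<integral>\<^sup>+ q. ennreal ((f q)\<^sup>2) \<partial>\<mu>) < \<infinity>"
    and \<epsilon>: "\<epsilon> > 0"
  shows "AE p in \<mu>. ennreal ((trunc_SIO gmul d K \<mu> \<epsilon> f p)\<^sup>2)
    \<le> 2 * (indicator A p * ennreal ((partial_SIO \<epsilon> f A p)\<^sup>2))
      + 2 * (indicator A p * ennreal ((partial_SIO \<epsilon> f B' p)\<^sup>2))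
      + 2 * (indicator B' p * ennreal ((partial_SIO \<epsilon> f A p)\<^sup>2))
      + 2 * (indicator B' p * ennreal ((partial_SIO \<epsilon> f B' p)\<^sup>2))"
  using AE_in_dsupp AE_not_in_both
proof eventually_elim
  case (elim p)
  have "ennreal ((trunc_SIO gmul d K \<mu> \<epsilon> f p)\<^sup>2)
      \<le> 2 * ennreal ((partial_SIO \<epsilon> f A p)\<^sup>2) + 2 * ennreal ((partial_SIO \<epsilon> f B' p)\<^sup>2)"
    unfolding trunc_SIO_split[OF f f2 \<epsilon> elim(1)] by (rule ennreal_power2_add_le)
  then show ?case
    using elim dsupp_split by (auto simp: indicator_def)
qed

lemma SIO_bounded_split:
  assumes bounded_A: "SIO_bounded gmul d K (restr_measure \<mu> A) C1"
    and bounded_B': "SIO_bounded gmul d K (restr_measure \<mu> B') C2"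
  shows "SIO_bounded gmul d K \<mu> (sqrt (2 * C1\<^sup>2 + 2 * C2\<^sup>2 + 64 * Bk\<^sup>2 * CR\<^sup>2))"
  unfolding SIO_bounded_def
proof (intro conjI allI impI)
  fix \<epsilon> :: real and f
  assume \<epsilon>: "\<epsilon> > 0" and "f \<in> borel_measurable \<mu> \<and> (\<integral>\<^sup>+ q. ennreal ((f q)\<^sup>2) \<partial>\<mu>) < \<infinity>"
  then have f: "f \<in> borel_measurable borel" and f2: "(\<integral>\<^sup>+ q. ennreal ((f q)\<^sup>2) \<partial>\<mu>) < \<infinity>"
    by (simp_all add: measurable_cong_sets[OF sets_\<mu> refl])
  let ?F = "\<integral>\<^sup>+ q. ennreal ((f q)\<^sup>2) \<partial>\<mu>"
  let ?c = "16 * Bk\<^sup>2 * CR\<^sup>2"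
  define S where "S W1 W2 p = indicator W1 p * ennreal ((partial_SIO \<epsilon> f W2 p)\<^sup>2)" for W1 W2 p
  have S_measurable: "S W1 W2 \<in> borel_measurable \<mu>" if "W1 \<in> sets borel" "W2 \<in> sets borel" for W1 W2
    unfolding S_def using partial_SIO_measurable[OF f that(2)] that(1)
    by (intro borel_measurable_\<mu> borel_measurable_times_ennreal borel_measurable_indicator
        measurable_compose[OF _ measurable_ennreal] borel_measurable_power) auto
  have "AE p in \<mu>. ennreal ((trunc_SIO gmul d K \<mu> \<epsilon> f p)\<^sup>2)
      \<le> 2 * S A A p + 2 * S A B' p + 2 * S B' A p + 2 * S B' B' p"
    unfolding S_def by (rule AE_trunc_SIO_power2_le[OF f f2 \<epsilon>])
  then have "(\<integral>\<^sup>+ p. ennreal ((trunc_SIO gmul d K \<mu> \<epsilon> f p)\<^sup>2) \<partial>\<mu>)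
      \<le> (\<integral>\<^sup>+ p. 2 * S A A p + 2 * S A B' p + 2 * S B' A p + 2 * S B' B' p \<partial>\<mu>)"
    by (rule nn_integral_mono_AE)
  also have "\<dots> = 2 * integral\<^sup>N \<mu> (S A A) + 2 * integral\<^sup>N \<mu> (S A B')
      + 2 * integral\<^sup>N \<mu> (S B' A) + 2 * integral\<^sup>N \<mu> (S B' B')"
    using S_measurable sets_A_B' by (simp add: nn_integral_add nn_integral_cmult)
  also have "\<dots> \<le> 2 * (ennreal (C1\<^sup>2) * ?F) + 2 * (ennreal ?c * ?F)
      + 2 * (ennreal ?c * ?F) + 2 * (ennreal (C2\<^sup>2) * ?F)"
    unfolding S_def
    by (intro add_mono mult_left_mono order_refl partial_SIO_cross_bound f \<epsilon>
        partial_SIO_diagonal_bound[OF sets_A_B'(1) bounded_A f f2 \<epsilon>]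
        partial_SIO_diagonal_bound[OF sets_A_B'(2) bounded_B' f f2 \<epsilon>]) simp_all
  also have "\<dots> = (2 * ennreal (C1\<^sup>2) + 2 * ennreal ?c + 2 * ennreal ?c + 2 * ennreal (C2\<^sup>2)) * ?F"
    by (simp add: distrib_right mult.assoc)
  also have "2 * ennreal (C1\<^sup>2) + 2 * ennreal ?c + 2 * ennreal ?c + 2 * ennreal (C2\<^sup>2)
      = ennreal (2 * C1\<^sup>2 + 2 * C2\<^sup>2 + 64 * Bk\<^sup>2 * CR\<^sup>2)"
    by (simp add: numeral_mult_ennreal flip: ennreal_plus)
  also have "2 * C1\<^sup>2 + 2 * C2\<^sup>2 + 64 * Bk\<^sup>2 * CR\<^sup>2 = (sqrt (2 * C1\<^sup>2 + 2 * C2\<^sup>2 + 64 * Bk\<^sup>2 * CR\<^sup>2))\<^sup>2"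
    by simp
  finally show "(\<integral>\<^sup>+ p. ennreal ((trunc_SIO gmul d K \<mu> \<epsilon> f p)\<^sup>2) \<partial>\<mu>)
      \<le> ennreal ((sqrt (2 * C1\<^sup>2 + 2 * C2\<^sup>2 + 64 * Bk\<^sup>2 * CR\<^sup>2))\<^sup>2) * ?F" .
qed simp

end

text \<open>If the support has diameter 0 no pair of points is \<open>\<epsilon>\<close>-separated, so every truncation vanishes.\<close>

lemma (in continuous_metric) SIO_bounded_if_ddiam_dsupp_nonpos:
  assumes radon: "radon_measure \<mu>" and "ddiam d (dsupp d \<mu>) \<le> 0" and "0 \<le> C"
  shows "SIO_bounded gmul d K \<mu> C"
proof -
  have vanish: "AE p in \<mu>. trunc_SIO gmul d K \<mu> \<epsilon> f p = 0" if "\<epsilon> > 0" for \<epsilon> f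
    using open_Compl_dsupp(2)[OF radon]
  proof eventually_elim
    case (elim p)
    have "AE q in \<mu>. indicator {q. d p q > \<epsilon>} q * K (gmul (- q) p) * f q = 0"
      using open_Compl_dsupp(2)[OF radon]
    proof eventually_elim
      case (elim q)
      have "ereal (d p q) \<le> 0"
        using le_ddiam[OF \<open>p \<in> dsupp d \<mu>\<close> elim, of d] assms(2) by (rule order_trans)
      then show ?case
        using that by simp
    qed
    then show ?case
      unfolding trunc_SIO_def by (rule integral_eq_zero_AE)
  qed
  show ?thesis
    unfolding SIO_bounded_def
  proof (intro conjI allI impI)
    fix \<epsilon> :: real and f :: "'a \<Rightarrow> real"
    assume "\<epsilon> > 0"
    have "(\<integral>\<^sup>+ p. ennreal ((trunc_SIO gmul d K \<mu> \<epsilon> f p)\<^sup>2) \<partial>\<mu>) = (\<integral>\<^sup>+ p. 0 \<partial>\<mu>)"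
      using vanish[OF \<open>\<epsilon> > 0\<close>, of f] by (intro nn_integral_cong_AE) (auto elim: eventually_mono)
    then show "(\<integral>\<^sup>+ p. ennreal ((trunc_SIO gmul d K \<mu> \<epsilon> f p)\<^sup>2) \<partial>\<mu>)
        \<le> ennreal (C\<^sup>2) * (\<integral>\<^sup>+ q. ennreal ((f q)\<^sup>2) \<partial>\<mu>)"
      by simp
  qed (rule assms(3))
qed

theorem lemma4p1:
  fixes gmul :: "'a::euclidean_space \<Rightarrow> 'a \<Rightarrow> 'a"
    and V :: "nat \<Rightarrow> 'a set" and s :: nat
    and dil :: "real \<Rightarrow> 'a \<Rightarrow> 'a"
    and d :: "'a \<Rightarrow> 'a \<Rightarrow> real"
    and C1 C2 CR Bk :: real
  assumes "carnot_group gmul V s"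
    and "carnot_dilations V s dil"
    and "homogeneous_distance gmul dil d"
  shows "\<exists>C. \<forall>(K :: 'a \<Rightarrow> real) (\<mu> :: 'a measure) A B'.
           continuous_on (UNIV - {0}) K \<and>
           (\<forall>p. p \<noteq> 0 \<longrightarrow> \<bar>K p\<bar> \<le> Bk / d p 0) \<and>
           radon_measure \<mu> \<and> one_regular d \<mu> CR \<and>
           dsupp d \<mu> = A \<union> B' \<and> d_bounded d B' \<and> ddiam d B' \<le> ddist d A B' \<and>
           SIO_bounded gmul d K (restr_measure \<mu> A) C1 \<and>
           SIO_bounded gmul d K (restr_measure \<mu> B') C2
           \<longrightarrow> SIO_bounded gmul d K \<mu> C"
proof (intro exI allI impI)
  fix K :: "'a \<Rightarrow> real" and \<mu> :: "'a measure" and A B'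
  assume H: "continuous_on (UNIV - {0}) K \<and>
           (\<forall>p. p \<noteq> 0 \<longrightarrow> \<bar>K p\<bar> \<le> Bk / d p 0) \<and>
           radon_measure \<mu> \<and> one_regular d \<mu> CR \<and>
           dsupp d \<mu> = A \<union> B' \<and> d_bounded d B' \<and> ddiam d B' \<le> ddist d A B' \<and>
           SIO_bounded gmul d K (restr_measure \<mu> A) C1 \<and>
           SIO_bounded gmul d K (restr_measure \<mu> B') C2"
  interpret continuous_metric d
    using homogeneous_distance_continuous_metric[OF assms(3)] .
  have Bk_nonneg: "0 \<le> Bk"
    using H nonneg_if_bounded_by_inverse_distance by blast
  show "SIO_bounded gmul d K \<mu> (sqrt (2 * C1\<^sup>2 + 2 * C2\<^sup>2 + 64 * Bk\<^sup>2 * CR\<^sup>2))"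
  proof (cases "ddiam d (dsupp d \<mu>) > 0")
    case True
    interpret separated_split d \<mu> CR gmul K Bk A B'
      using H True Bk_nonneg carnot_group_kernel_bound[OF assms(1,3)]
        carnot_group_kernel_measurable[OF assms(1)]
      by unfold_locales (auto simp: d_eq_0_iff d_sym d_triangle continuous_d)
    show ?thesis
      using H by (intro SIO_bounded_split) auto
  next
    case False
    then show ?thesis
      using H by (intro SIO_bounded_if_ddiam_dsupp_nonpos) auto
  qed
qed

end
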